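(* Let $N=\{1,\dots,n\}$ and let $F:2^N\to\mathbb{R}$ be quasi-submodular. For the sequences $(X_t),(Y_t)$ generated by the maximization procedure (described in the context), at every iteration $t$ other than the last one (i.e., whenever $X_{t+1}\ne X_t$ or $Y_{t+1}\ne Y_t$), we have $F(X_{t+1})>F(X_t)$ or $F(Y_{t+1})>F(Y_t)$.
   Context: For $A\subseteq N$ and $i\in N$, write $A+i=A\cup\{i\}$, $A-i=A\setminus\{i\}$, and $F(i\mid A)=F(A+i)-F(A)$. $F$ is quasi-submodular if for all $X,Y\subseteq N$ both hold: $F(X\cap Y)\ge F(X)\Rightarrow F(Y)\ge F(X\cup Y)$, and $F(X\cap Y)>F(X)\Rightarrow F(Y)>F(X\cup Y)$. Maximization procedure: set $X_0=\emptyset$, $Y_0=N$; for $t=0,1,2,\dots$: let $U_t=\{u\in Y_t\setminus X_t: F(u\mid Y_t-u)>0\}$ and $X_{t+1}=X_t\cup U_t$; let $D_t=\{d\in Y_t\setminus X_t: F(d\mid X_t)<0\}$ and $Y_{t+1}=Y_t\setminus D_t$; if $X_{t+1}=X_t$ and $Y_{t+1}=Y_t$, stop and output $[X_t,Y_t]$; otherwise continue with $t+1$. *)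

theory Defs
  imports Complex_Main
begin

definition marg :: "(nat set \<Rightarrow> real) \<Rightarrow> nat \<Rightarrow> nat set \<Rightarrow> real" where
  "marg F i A = F (insert i A) - F A"

definition quasi_submodular :: "nat set \<Rightarrow> (nat set \<Rightarrow> real) \<Rightarrow> bool" where
  "quasi_submodular N F \<longleftrightarrow>
     (\<forall>X Y. X \<subseteq> N \<longrightarrow> Y \<subseteq> N \<longrightarrow>
        (F (X \<inter> Y) \<ge> F X \<longrightarrow> F Y \<ge> F (X \<union> Y)) \<and>
        (F (X \<inter> Y) > F X \<longrightarrow> F Y > F (X \<union> Y)))"

definition max_step :: "(nat set \<Rightarrow> real) \<Rightarrow> nat set \<times> nat set \<Rightarrow> nat set \<times> nat set" where
  "max_step F XY = (let X = fst XY; Y = snd XY;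
      U = {u \<in> Y - X. marg F u (Y - {u}) > 0};
      D = {d \<in> Y - X. marg F d X < 0}
    in (X \<union> U, Y - D))"

text \<open>The pair (X_t, Y_t) produced by the procedure, started at (empty, N).
  Once the procedure stops (a fixed point is reached), the sequence stays constant.\<close>
definition max_seq :: "nat set \<Rightarrow> (nat set \<Rightarrow> real) \<Rightarrow> nat \<Rightarrow> nat set \<times> nat set" where
  "max_seq N F t = (max_step F ^^ t) ({}, N)"

end

theory Submission
  imports Defs
begin

text \<open>Quasi-submodularity transports the sign of a marginal gain across nested sets: applied to
  the pair X + u, Y - u, whose intersection is X and union is Y, it shows that an element which
  strictly helps at the top of an interval [X, Y] strictly helps at X, and dually an element which
  strictly hurts at X strictly hurts at Y. Adding the elements of U one at a time therefore
  increases F from X_t to X_{t+1}, removing those of D one at a time increases F from Y_t to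
  Y_{t+1}, and one of U, D is nonempty unless the procedure stops.\<close>

lemma quasi_submodularD_le:
  "\<lbrakk>quasi_submodular N F; X \<subseteq> N; Y \<subseteq> N; F (X \<inter> Y) \<ge> F X\<rbrakk> \<Longrightarrow> F Y \<ge> F (X \<union> Y)"
  unfolding quasi_submodular_def by blast

lemma quasi_submodularD_less:
  "\<lbrakk>quasi_submodular N F; X \<subseteq> N; Y \<subseteq> N; F (X \<inter> Y) > F X\<rbrakk> \<Longrightarrow> F Y > F (X \<union> Y)"
  unfolding quasi_submodular_def by blast

lemma quasi_submodular_insert_gain:
  assumes q: "quasi_submodular N F" and "Y \<subseteq> N" "u \<in> Y" "X \<subseteq> Y - {u}"
    and gain: "F Y > F (Y - {u})"
  shows "F (insert u X) > F X"
proof (rule ccontr)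
  have cap: "insert u X \<inter> (Y - {u}) = X" and cup: "insert u X \<union> (Y - {u}) = Y"
    using assms by auto
  assume "\<not> F (insert u X) > F X"
  then have "F (Y - {u}) \<ge> F Y"
    using quasi_submodularD_le[OF q, of "insert u X" "Y - {u}"] assms cap cup by auto
  with gain show False by simp
qed

lemma quasi_submodular_remove_gain:
  assumes q: "quasi_submodular N F" and "Y \<subseteq> N" "d \<in> Y" "X \<subseteq> Y - {d}"
    and loss: "F (insert d X) < F X"
  shows "F (Y - {d}) > F Y"
proof -
  have cap: "insert d X \<inter> (Y - {d}) = X" and cup: "insert d X \<union> (Y - {d}) = Y"
    using assms by auto
  show ?thesis
    using quasi_submodularD_less[OF q, of "insert d X" "Y - {d}"] assms cap cup by auto
qed

lemma quasi_submodular_union_gain: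
  assumes "finite U" "U \<noteq> {}"
    and "quasi_submodular N F" "Y \<subseteq> N" "X \<subseteq> Y" "U \<subseteq> Y - X"
    and "\<forall>u\<in>U. F Y > F (Y - {u})"
  shows "F (X \<union> U) > F X"
  using assms
proof (induction U rule: finite_ne_induct)
  case (singleton u)
  then show ?case using quasi_submodular_insert_gain[of N F Y u X] by auto
next
  case (insert u U)
  have "F (X \<union> U) > F X" using insert by auto
  moreover have "F (insert u (X \<union> U)) > F (X \<union> U)"
    using quasi_submodular_insert_gain[of N F Y u "X \<union> U"] insert by auto
  ultimately show ?case by simp
qed

lemma quasi_submodular_diff_gain:
  assumes "finite D" "D \<noteq> {}"
    and "quasi_submodular N F" "Y \<subseteq> N" "X \<subseteq> Y" "D \<subseteq> Y - X"
    and "\<forall>d\<in>D. F (insert d X) < F X"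
  shows "F (Y - D) > F Y"
  using assms
proof (induction D rule: finite_ne_induct)
  case (singleton d)
  then show ?case using quasi_submodular_remove_gain[of N F Y d X] by auto
next
  case (insert d D)
  have "F (Y - D) > F Y" using insert by auto
  moreover have "F (Y - D - {d}) > F (Y - D)"
    using quasi_submodular_remove_gain[of N F "Y - D" d X] insert by auto
  moreover have "Y - insert d D = Y - D - {d}" by auto
  ultimately show ?case by simp
qed

lemma max_step_eq:
  "max_step F (X, Y) =
     (X \<union> {u \<in> Y - X. F Y > F (Y - {u})}, Y - {d \<in> Y - X. F (insert d X) < F X})"
  unfolding max_step_def Let_def marg_def by (auto intro!: Collect_cong simp: insert_absorb)

lemma max_step_subset:
  assumes q: "quasi_submodular N F" and "X \<subseteq> Y" "Y \<subseteq> N"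
  shows "fst (max_step F (X, Y)) \<subseteq> snd (max_step F (X, Y))"
proof -
  have "\<not> F (insert u X) < F X" if "u \<in> Y - X" "F Y > F (Y - {u})" for u
  proof -
    have "X \<subseteq> Y - {u}" using assms that by auto
    then show ?thesis using quasi_submodular_insert_gain[OF q, of Y u X] assms that by auto
  qed
  then show ?thesis unfolding max_step_eq using assms by auto
qed

lemma max_seq_subset:
  assumes "quasi_submodular N F"
  shows "fst (max_seq N F t) \<subseteq> snd (max_seq N F t) \<and> snd (max_seq N F t) \<subseteq> N"
proof (induction t)
  case 0
  then show ?case by (simp add: max_seq_def)
next
  case (Suc t)
  obtain X Y where XY: "max_seq N F t = (X, Y)" by fastforce
  then have step: "max_seq N F (Suc t) = max_step F (X, Y)" by (simp add: max_seq_def)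
  have "X \<subseteq> Y" "Y \<subseteq> N" using Suc XY by auto
  then show ?case
    unfolding step using max_step_subset[OF assms] by (auto simp: max_step_eq)
qed

lemma max_step_strict_gain:
  assumes "finite N" "quasi_submodular N F" "X \<subseteq> Y" "Y \<subseteq> N"
    and "max_step F (X, Y) \<noteq> (X, Y)"
  shows "F (fst (max_step F (X, Y))) > F X \<or> F (snd (max_step F (X, Y))) > F Y"
proof -
  define U where "U = {u \<in> Y - X. F Y > F (Y - {u})}"
  define D where "D = {d \<in> Y - X. F (insert d X) < F X}"
  have step: "max_step F (X, Y) = (X \<union> U, Y - D)"
    unfolding max_step_eq U_def D_def ..
  have "finite Y" using assms(1,4) finite_subset by blast
  then have "finite U" "finite D" unfolding U_def D_def by auto
  from assms(5) have "U \<noteq> {} \<or> D \<noteq> {}" unfolding step by auto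
  then show ?thesis
  proof
    assume "U \<noteq> {}"
    then have "F (X \<union> U) > F X"
      using quasi_submodular_union_gain[OF \<open>finite U\<close>] assms(2-4) by (auto simp: U_def)
    then show ?thesis unfolding step by simp
  next
    assume "D \<noteq> {}"
    then have "F (Y - D) > F Y"
      using quasi_submodular_diff_gain[OF \<open>finite D\<close>] assms(2-4) by (auto simp: D_def)
    then show ?thesis unfolding step by simp
  qed
qed

theorem lemma6:
  fixes n :: nat and F :: "nat set \<Rightarrow> real" and t :: nat
  assumes "quasi_submodular {1..n} F"
    and "fst (max_seq {1..n} F (Suc t)) \<noteq> fst (max_seq {1..n} F t)
         \<or> snd (max_seq {1..n} F (Suc t)) \<noteq> snd (max_seq {1..n} F t)"
  shows "F (fst (max_seq {1..n} F (Suc t))) > F (fst (max_seq {1..n} F t))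
         \<or> F (snd (max_seq {1..n} F (Suc t))) > F (snd (max_seq {1..n} F t))"
proof -
  obtain X Y where XY: "max_seq {1..n} F t = (X, Y)" by fastforce
  then have step: "max_seq {1..n} F (Suc t) = max_step F (X, Y)" by (simp add: max_seq_def)
  have "X \<subseteq> Y" "Y \<subseteq> {1..n}" using max_seq_subset[OF assms(1), of t] XY by auto
  moreover have "max_step F (X, Y) \<noteq> (X, Y)" using assms(2) XY step by auto
  ultimately show ?thesis
    using max_step_strict_gain[OF finite_atLeastAtMost assms(1)] XY step by simp
qed

end
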